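(* As $n\to\infty$, $$ \sum_{q \text{ prime}}\sum_{m\ge 2}\frac{c_n(q^m)}{m q^m} = O\left(\frac{\omega(n)}{n}\right), $$ where $\omega(n)$ is the number of distinct prime divisors of $n$.
   Context: For a natural number $n$ and a positive integer $r$, define $c_n(r)=1$ if $r=q^m$ is a power ($m\ge1$) of a prime $q$ with $r\equiv 1\pmod n$, $c_n(r)=-1$ if $r=q^m$ is a prime power with $r\equiv -1\pmod n$, and $c_n(r)=0$ otherwise. *)

theory Defs
  imports "HOL-Analysis.Analysis" "HOL-Library.Landau_Symbols"
    "HOL-Computational_Algebra.Primes" "HOL-Number_Theory.Cong"
begin

text \<open>c_n(r): 1 if r is a prime power q^m (m >= 1) with r = 1 mod n,
  -1 if r is a prime power with r = -1 mod n, 0 otherwise.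
  (The first case takes precedence, relevant only when n divides 2.)\<close>
definition c :: "nat \<Rightarrow> nat \<Rightarrow> real" where
  "c n r = (if (\<exists>q m. prime q \<and> m \<ge> 1 \<and> r = q ^ m) then
              (if [int r = 1] (mod int n) then 1
               else if [int r = -1] (mod int n) then -1 else 0)
            else 0)"

definition omega :: "nat \<Rightarrow> nat" where
  "omega n = card (prime_factors n)"

definition S :: "nat \<Rightarrow> real" where
  "S n = (\<Sum>\<^sub>\<infinity>q\<in>{q::nat. prime q}. \<Sum>\<^sub>\<infinity>m\<in>{2::nat..}.
            c n (q ^ m) / (real m * real q ^ m))"

end

theory Submission
  imports Defs "HOL-Number_Theory.Residue_Primitive_Roots"
begin

text \<open>
  Only prime powers v = q^m with v \<equiv> \<plusminus>1 (mod n) contribute, each by at most 1/(m v).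
  Primes q \<ge> n contribute at most the sum of 1/(q(q - 1)) over q \<ge> n, which is 1/(n - 1), and
  for q < n the exponents m \<ge> 2^(2n) only add a negligible geometric tail. The remaining
  exponents are grouped into dyadic blocks 2^i \<le> m < 2^(i+1). Since q^m \<equiv> \<plusminus>1 forces
  q^(2m) \<equiv> 1 (mod n), and x^E \<equiv> 1 (mod n) has at most (2E)^\<omega>(n) solutions below n (Chinese
  remainder theorem; cyclicity of the units modulo p^a for odd p, a 2-adic argument for p = 2),
  block i contains at most 2^(i + (i + 3) \<omega>(n)) of these prime powers. At most N distinct
  integers v \<ge> 2 with v \<equiv> \<plusminus>1 (mod n) have reciprocal sum O(log N / n), because the numbers
  (v - 1)/n, resp. (v + 1)/n, are distinct positive integers. Hence block i contributes
  O((i + 1)(\<omega>(n) + 1) / (2^i n)), and summing over i gives O(\<omega>(n)/n).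
\<close>

section \<open>Roots of unity modulo \<open>n\<close>\<close>

lemma card_cong_less_mult_le:
  "card {x::nat. x < k * d \<and> [int x = r] (mod int d)} \<le> k"
proof -
  let ?A = "{x::nat. x < k * d \<and> [int x = r] (mod int d)}"
  have "inj_on (\<lambda>x. x div d) ?A"
  proof (rule inj_onI)
    fix x y assume "x \<in> ?A" "y \<in> ?A" "x div d = y div d"
    moreover from \<open>x \<in> ?A\<close> \<open>y \<in> ?A\<close> have "[int x = int y] (mod int d)"
      by (metis (mono_tags) cong_sym cong_trans mem_Collect_eq)
    hence "x mod d = y mod d" by (metis cong_int_iff cong_def)
    ultimately show "x = y" by (metis div_mod_decomp)
  qed
  moreover have "(\<lambda>x. x div d) ` ?A \<subseteq> {..<k}"
    by (auto intro: less_mult_imp_div_less)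
  ultimately show ?thesis
    by (metis card_image card_lessThan card_mono finite_lessThan)
qed

lemma odd_square_cong_one_two_power:
  fixes x :: int
  assumes "odd x" "[x\<^sup>2 = 1] (mod 2 ^ Suc a)"
  shows "[x = 1] (mod 2 ^ a) \<or> [x = -1] (mod 2 ^ a)"
proof (cases a)
  case (Suc b)
  obtain u where u: "x = 2 * u + 1" using assms(1) oddE by blast
  have "4 * 2 ^ b dvd 4 * (u * (u + 1))"
    using assms(2) by (simp add: Suc cong_iff_dvd_diff u power2_eq_square algebra_simps)
  hence "2 ^ b dvd u * (u + 1)" by (metis dvd_mult_cancel_left zero_neq_numeral)
  moreover have "coprime (2 ^ b) u \<or> coprime (2 ^ b) (u + 1)" by auto
  ultimately have "2 ^ b dvd u \<or> 2 ^ b dvd u + 1"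
    by (metis coprime_dvd_mult_left_iff coprime_dvd_mult_right_iff)
  hence "2 * 2 ^ b dvd 2 * u \<or> 2 * 2 ^ b dvd 2 * (u + 1)"
    by (meson dvd_mult_cancel_left zero_neq_numeral)
  hence "2 ^ a dvd x - 1 \<or> 2 ^ a dvd x + 1"
    by (simp add: Suc u algebra_simps)
  thus ?thesis by (simp add: cong_iff_dvd_diff)
qed simp

lemma odd_root_two_power_cong_pm1:
  fixes x :: int
  assumes "odd x" "[x ^ 2 ^ b = 1] (mod 2 ^ (a + b))"
  shows "[x = 1] (mod 2 ^ a) \<or> [x = -1] (mod 2 ^ a)"
  using assms
proof (induction b arbitrary: x a)
  case (Suc b)
  have "[(x\<^sup>2) ^ 2 ^ b = 1] (mod 2 ^ (Suc a + b))"
    using Suc.prems(2) by (simp add: power_mult[symmetric] mult.commute)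
  with Suc.IH[of "x\<^sup>2" "Suc a"] Suc.prems(1)
  have "[x\<^sup>2 = 1] (mod 2 ^ Suc a) \<or> [x\<^sup>2 = -1] (mod 2 ^ Suc a)" by simp
  thus ?case
  proof
    assume "[x\<^sup>2 = 1] (mod 2 ^ Suc a)"
    thus ?case by (rule odd_square_cong_one_two_power[OF Suc.prems(1)])
  next
    assume minus: "[x\<^sup>2 = -1] (mod 2 ^ Suc a)"
    show ?case
    proof (cases a)
      case (Suc c)
      \<comment> \<open>an odd square is 1 modulo 4, never -1\<close>
      have "(4::int) dvd 2 ^ Suc a" by (simp add: Suc)
      with minus have "4 dvd x\<^sup>2 + 1" by (simp add: cong_iff_dvd_diff dvd_trans)
      moreover obtain u where "x = 2 * u + 1" using Suc.prems(1) oddE by blast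
      hence "x\<^sup>2 + 1 = 4 * (u\<^sup>2 + u) + 2" by (simp add: power2_eq_square algebra_simps)
      ultimately have "(4::int) dvd 2" by (metis dvd_add_right_iff dvd_triv_left)
      thus ?thesis by simp
    qed simp
  qed
qed simp

lemma coprime_of_cong_power_one:
  fixes x n :: nat
  assumes "[x ^ E = 1] (mod n)" "E > 0"
  shows "coprime x n"
proof -
  have "coprime (x ^ E) n" by (rule cong_imp_coprime[OF cong_sym[OF assms(1)]]) simp
  thus ?thesis using assms(2) by simp
qed

lemma card_dvd_mult_less_le: "card {i::nat. i < m \<and> m dvd i * E} \<le> gcd m E"
proof (cases "m = 0")
  case False
  define G t e where "G = gcd m E" and "t = m div G" and "e = E div G"
  have m: "m = G * t" and E: "E = G * e" by (simp_all add: G_def t_def e_def)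
  have "G > 0" using False by (simp add: G_def)
  have "coprime t e" unfolding t_def e_def G_def using div_gcd_coprime False by blast
  have "{i. i < m \<and> m dvd i * E} \<subseteq> {i. i < G * t \<and> [int i = 0] (mod int t)}"
  proof safe
    fix i assume "i < m" "m dvd i * E"
    hence "G * t dvd G * (i * e)" by (simp add: m E algebra_simps)
    hence "t dvd i * e" using \<open>G > 0\<close> by simp
    hence "t dvd i" using \<open>coprime t e\<close> by (simp add: coprime_dvd_mult_left_iff)
    thus "[int i = 0] (mod int t)" by (simp add: cong_0_iff)
    show "i < G * t" using \<open>i < m\<close> m by simp
  qed
  hence "card {i. i < m \<and> m dvd i * E} \<le> card {i. i < G * t \<and> [int i = 0] (mod int t)}"
    by (intro card_mono) auto
  also have "\<dots> \<le> G" by (rule card_cong_less_mult_le)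
  finally show ?thesis by (simp add: G_def)
qed simp

lemma card_roots_of_unity_mod_odd_prime_power:
  assumes "prime p" "odd p" "a > 0" "E > 0"
  shows "card {x::nat. x < p ^ a \<and> [x ^ E = 1] (mod p ^ a)} \<le> E"
proof -
  define m where "m = p ^ a"
  define T where "T = {x::nat. x < m \<and> [x ^ E = 1] (mod m)}"
  obtain g where "residue_primroot m g"
    using residue_primroot_odd_prime_power_exists[OF assms(1,2)] assms(3) m_def by metis
  have "m > 1" unfolding m_def using assms(1,3) prime_gt_1_nat one_less_power by blast
  have gen: "bij_betw (\<lambda>i. g ^ i mod m) {..<totient m} (totatives m)"
    by (rule residue_primroot_is_generator[OF \<open>m > 1\<close> \<open>residue_primroot m g\<close>])
  have ord: "ord m g = totient m"
    using \<open>residue_primroot m g\<close> by (simp add: residue_primroot_def)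
  have "T \<subseteq> (\<lambda>i. g ^ i mod m) ` {i. i < totient m \<and> totient m dvd i * E}"
  proof
    fix x assume "x \<in> T"
    hence "x < m" and root: "[x ^ E = 1] (mod m)" by (auto simp: T_def)
    have "x \<noteq> 0" using root assms(4) \<open>m > 1\<close> by (cases x) (auto simp: cong_def zero_power)
    hence "x \<in> totatives m"
      using \<open>x < m\<close> coprime_of_cong_power_one[OF root assms(4)] by (simp add: totatives_def)
    then obtain i where i: "i < totient m" "x = g ^ i mod m"
      using gen by (auto simp: bij_betw_def)
    have "[g ^ (i * E) = x ^ E] (mod m)"
      by (simp add: i(2) cong_def power_mod power_mult)
    hence "[g ^ (i * E) = 1] (mod m)" using root by (rule cong_trans)
    hence "totient m dvd i * E" using ord ord_divides by metis
    thus "x \<in> (\<lambda>i. g ^ i mod m) ` {i. i < totient m \<and> totient m dvd i * E}"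
      using i by blast
  qed
  hence "card T \<le> card ((\<lambda>i. g ^ i mod m) ` {i. i < totient m \<and> totient m dvd i * E})"
    by (intro card_mono) auto
  also have "\<dots> \<le> card {i. i < totient m \<and> totient m dvd i * E}"
    by (intro card_image_le) auto
  also have "\<dots> \<le> gcd (totient m) E" by (rule card_dvd_mult_less_le)
  also have "\<dots> \<le> E" using assms(4) by simp
  finally show ?thesis by (simp add: T_def m_def)
qed

lemma card_roots_of_unity_mod_two_power:
  assumes "E > 0"
  shows "card {x::nat. x < 2 ^ a \<and> [x ^ E = 1] (mod 2 ^ a)} \<le> 2 * E"
proof (cases "a = 0")
  case True
  hence "{x::nat. x < 2 ^ a \<and> [x ^ E = 1] (mod 2 ^ a)} \<subseteq> {0}" by auto
  from card_mono[OF _ this] show ?thesis using assms by simp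
next
  case False
  define T where "T = {x::nat. x < 2 ^ a \<and> [x ^ E = 1] (mod 2 ^ a)}"
  have "gcd E (2 ^ (a - 1)) dvd 2 ^ (a - 1)" by simp
  then obtain b where b: "gcd E (2 ^ (a - 1)) = 2 ^ b" "b \<le> a - 1"
    using divides_primepow_nat[OF two_is_prime_nat] by blast
  define d where "d = a - b"
  have a: "a = d + b" and "d > 0" using b(2) False by (simp_all add: d_def)
  define R where "R r = {x::nat. x < 2 ^ b * 2 ^ d \<and> [int x = r] (mod int (2 ^ d))}" for r
  have "T \<subseteq> R 1 \<union> R (-1)"
  proof
    fix x assume "x \<in> T"
    hence "x < 2 ^ a" and root: "[x ^ E = 1] (mod 2 ^ a)" by (auto simp: T_def)
    have "coprime x (2 ^ a)" by (rule coprime_of_cong_power_one[OF root assms])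
    hence "odd x" using False by simp
    have "[x ^ totient (2 ^ a) = 1] (mod 2 ^ a)"
      by (rule euler_theorem) (use \<open>coprime x (2 ^ a)\<close> in \<open>simp add: coprime_commute\<close>)
    hence "ord (2 ^ a) x dvd 2 ^ (a - 1)"
      using False by (simp add: totient_prime_power ord_divides')
    moreover have "ord (2 ^ a) x dvd E" using root by (simp add: ord_divides')
    ultimately have "ord (2 ^ a) x dvd 2 ^ b" using b(1) by (metis gcd_greatest gcd.commute)
    hence "[x ^ 2 ^ b = 1] (mod 2 ^ (d + b))" by (simp add: a ord_divides')
    hence "[int x ^ 2 ^ b = 1] (mod 2 ^ (d + b))"
      by (metis cong_int_iff of_nat_1 of_nat_numeral of_nat_power)
    hence "[int x = 1] (mod 2 ^ d) \<or> [int x = -1] (mod 2 ^ d)"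
      by (rule odd_root_two_power_cong_pm1[rotated]) (simp add: \<open>odd x\<close>)
    thus "x \<in> R 1 \<union> R (-1)"
      using \<open>x < 2 ^ a\<close> by (simp add: R_def a power_add mult.commute)
  qed
  hence "card T \<le> card (R 1 \<union> R (-1))" by (intro card_mono) (auto simp: R_def)
  also have "\<dots> \<le> card (R 1) + card (R (-1))" by (rule card_Un_le)
  also have "\<dots> \<le> 2 ^ b + 2 ^ b" unfolding R_def by (intro add_mono card_cong_less_mult_le)
  also have "\<dots> \<le> 2 * E" using gcd_le1_nat[of E "2 ^ (a - 1)"] b(1) assms by linarith
  finally show ?thesis by (simp add: T_def)
qed

lemma card_roots_of_unity_mod_prime_power:
  assumes "prime p" "E > 0"
  shows "card {x::nat. x < p ^ a \<and> [x ^ E = 1] (mod p ^ a)} \<le> 2 * E"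
proof (cases "p = 2")
  case True
  thus ?thesis using card_roots_of_unity_mod_two_power[OF assms(2), of a] by (simp only:)
next
  case False
  hence "odd p" using primes_dvd_imp_eq[OF two_is_prime_nat assms(1)] by auto
  show ?thesis
  proof (cases "a = 0")
    case True
    hence "{x::nat. x < p ^ a \<and> [x ^ E = 1] (mod p ^ a)} \<subseteq> {0}" by auto
    from card_mono[OF _ this] show ?thesis using assms by simp
  next
    case False
    hence "card {x::nat. x < p ^ a \<and> [x ^ E = 1] (mod p ^ a)} \<le> E"
      using card_roots_of_unity_mod_odd_prime_power[OF assms(1) \<open>odd p\<close> _ assms(2)] by blast
    thus ?thesis by linarith
  qed
qed

lemma card_roots_of_unity_mod_mult_coprime:
  fixes m k E :: nat
  assumes "coprime m k" "m > 0" "k > 0"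
  defines "R \<equiv> \<lambda>n. {x::nat. x < n \<and> [x ^ E = 1] (mod n)}"
  shows "card (R (m * k)) \<le> card (R m) * card (R k)"
proof -
  let ?crt = "\<lambda>x. (x mod m, x mod k)"
  have "inj_on ?crt (R (m * k))"
  proof (rule inj_onI)
    fix x y assume "x \<in> R (m * k)" "y \<in> R (m * k)" "?crt x = ?crt y"
    hence "[x = y] (mod m)" "[x = y] (mod k)" by (simp_all add: cong_def)
    hence "[x = y] (mod m * k)" using assms(1) by (rule coprime_cong_mult_nat)
    thus "x = y"
      using \<open>x \<in> R (m * k)\<close> \<open>y \<in> R (m * k)\<close> by (auto simp: R_def cong_less_modulus_unique_nat)
  qed
  moreover have "?crt ` R (m * k) \<subseteq> R m \<times> R k"
  proof (rule image_subsetI)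
    fix x assume "x \<in> R (m * k)"
    hence "[x ^ E = 1] (mod m)" "[x ^ E = 1] (mod k)"
      by (auto simp: R_def intro: cong_dvd_modulus_nat)
    thus "?crt x \<in> R m \<times> R k"
      using assms(2,3) by (simp add: R_def cong_def power_mod)
  qed
  moreover have "finite (R m \<times> R k)" by (simp add: R_def)
  ultimately have "card (R (m * k)) \<le> card (R m \<times> R k)"
    by (metis card_image card_mono)
  thus ?thesis by (simp add: card_cartesian_product)
qed

lemma omega_prime_power_mult:
  assumes "prime p" "a > 0" "r > 0" "\<not> p dvd r"
  shows "omega (p ^ a * r) = Suc (omega r)"
proof -
  have "prime_factors (p ^ a * r) = insert p (prime_factors r)"
    using assms by (simp add: prime_factors_product prime_factors_power prime_prime_factors)
  moreover have "p \<notin> prime_factors r" using assms(4) by (auto dest: in_prime_factors_imp_dvd)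
  ultimately show ?thesis by (simp add: omega_def)
qed

lemma card_roots_of_unity_mod:
  assumes "n > 0" "E > 0"
  shows "card {x::nat. x < n \<and> [x ^ E = 1] (mod n)} \<le> (2 * E) ^ omega n"
  using assms(1)
proof (induction n rule: less_induct)
  case (less n)
  show ?case
  proof (cases "n = 1")
    case True
    hence "{x::nat. x < n \<and> [x ^ E = 1] (mod n)} \<subseteq> {0}" by auto
    from card_mono[OF _ this] show ?thesis using True by (simp add: omega_def)
  next
    case False
    then obtain p where p: "prime p" "p dvd n" using prime_factor_nat by blast
    define a where "a = multiplicity p n"
    obtain r where n: "n = p ^ a * r" and "\<not> p dvd r"
      using multiplicity_decompose'[of n p] less.prems p(1) not_prime_unit unfolding a_def by blast
    have "a > 0" using p less.prems by (simp add: a_def prime_multiplicity_gt_zero_iff)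
    have "r > 0" using n less.prems by (cases r) auto
    have "p ^ a > 1" using \<open>a > 0\<close> p(1) prime_gt_1_nat one_less_power by blast
    hence "r < n" using n \<open>r > 0\<close> by simp
    have "coprime (p ^ a) r" using prime_imp_coprime[OF p(1) \<open>\<not> p dvd r\<close>] by simp
    have "card {x::nat. x < n \<and> [x ^ E = 1] (mod n)}
          \<le> card {x::nat. x < p ^ a \<and> [x ^ E = 1] (mod p ^ a)} * card {x. x < r \<and> [x ^ E = 1] (mod r)}"
      unfolding n by (rule card_roots_of_unity_mod_mult_coprime)
        (use \<open>coprime (p ^ a) r\<close> \<open>r > 0\<close> prime_gt_0_nat[OF p(1)] in auto)
    also have "\<dots> \<le> (2 * E) * (2 * E) ^ omega r"
      using card_roots_of_unity_mod_prime_power[OF p(1) assms(2)] less.IH[OF \<open>r < n\<close> \<open>r > 0\<close>]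
      by (rule mult_mono) auto
    also have "\<dots> = (2 * E) ^ omega n"
      using omega_prime_power_mult[OF p(1) \<open>a > 0\<close> \<open>r > 0\<close> \<open>\<not> p dvd r\<close>] n by simp
    finally show ?thesis .
  qed
qed

section \<open>Reciprocal sums over the classes \<open>\<plusminus>1\<close> modulo \<open>n\<close>\<close>

lemma sum_inverse_le_harm:
  assumes "finite K" "0 \<notin> K"
  shows "(\<Sum>k\<in>K. 1 / real k) \<le> harm (card K)"
  using assms
proof (induction "card K" arbitrary: K)
  case (Suc N)
  define M where "M = Max K"
  have "K \<noteq> {}" using Suc.hyps(2) by auto
  hence "M \<in> K" using Suc.prems by (simp add: M_def)
  have "K \<subseteq> {1..M}" using Suc.prems by (auto simp: M_def Suc_le_eq intro: gr0I)
  hence "Suc N \<le> M" using card_mono[of "{1..M}" K] Suc.hyps(2) by simp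
  have "(\<Sum>k\<in>K. 1 / real k) = 1 / real M + (\<Sum>k\<in>K - {M}. 1 / real k)"
    using Suc.prems \<open>M \<in> K\<close> by (simp add: sum.remove)
  also have "\<dots> \<le> 1 / real (Suc N) + harm N"
  proof (rule add_mono)
    show "1 / real M \<le> 1 / real (Suc N)" using \<open>Suc N \<le> M\<close> by (simp add: frac_le)
    show "(\<Sum>k\<in>K - {M}. 1 / real k) \<le> harm N"
      using Suc.hyps Suc.prems \<open>M \<in> K\<close> by (metis card_Diff_singleton diff_Suc_1 finite_Diff DiffD1)
  qed
  also have "\<dots> = harm (Suc N)" by (simp add: harm_Suc inverse_eq_divide)
  finally show ?case using Suc.hyps(2) by simp
qed (simp add: harm_def)

lemma harm_le_of_le_two_power:
  assumes "N \<le> 2 ^ k"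
  shows "harm N \<le> real k + 1"
proof (cases "N = 0")
  case False
  \<comment> \<open>harm N - ln N decreases from its value 1 at N = 1\<close>
  have "harm N - ln (real N) \<le> 1"
    using euler_mascheroni_sequence_decreasing[of 1 N] False by (simp add: harm_def)
  hence "harm N \<le> 1 + ln (real N)" by simp
  also have "ln (real N) \<le> ln (2 ^ k)" using False assms by simp
  also have "\<dots> = real k * ln 2" by (simp add: ln_realpow)
  also have "\<dots> \<le> real k" using ln_2_less_1 by (simp add: mult_left_le)
  finally show ?thesis by simp
qed (simp add: harm_def)

lemma sum_inverse_cong_le:
  fixes r :: int
  assumes "finite V" and V: "\<And>v. v \<in> V \<Longrightarrow> [int v = r] (mod int n) \<and> \<bar>r\<bar> < int v"
  shows "(\<Sum>v\<in>V. 1 / real v) \<le> 2 * harm (card V) / real n"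
proof (cases "V = {}")
  case False
  \<comment> \<open>v = r + n k with k \<ge> 1, and v \<ge> \<bar>r\<bar> gives v \<ge> n k / 2\<close>
  define k where "k v = nat ((int v - r) div int n)" for v
  have vk: "int v - r = int n * int (k v)" "k v > 0" and n_pos: "n > 0" if "v \<in> V" for v
  proof -
    have "int n dvd int v - r" using V[OF that] by (simp add: cong_iff_dvd_diff)
    then obtain j where j: "int v - r = int n * j" by (elim dvdE)
    moreover have "int v - r > 0" using V[OF that] by (simp add: abs_less_iff)
    ultimately have "j > 0" "n > 0" by (auto simp: zero_less_mult_iff)
    thus "int v - r = int n * int (k v)" "k v > 0" "n > 0" using j by (simp_all add: k_def)
  qed
  have "n > 0" using False n_pos by blast
  have "inj_on k V" by (rule inj_onI) (metis vk(1) diff_add_cancel of_nat_eq_iff)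
  have "(\<Sum>v\<in>V. 1 / real v) \<le> (\<Sum>v\<in>V. (2 / real n) * (1 / real (k v)))"
  proof (rule sum_mono)
    fix v assume "v \<in> V"
    have "int n * int (k v) \<le> 2 * int v"
      using vk(1)[OF \<open>v \<in> V\<close>] V[OF \<open>v \<in> V\<close>] by (simp add: abs_less_iff)
    hence "n * k v \<le> 2 * v" by (simp flip: of_nat_mult)
    hence "real n * real (k v) \<le> 2 * real v" by (simp flip: of_nat_mult)
    thus "1 / real v \<le> (2 / real n) * (1 / real (k v))"
      using \<open>n > 0\<close> vk(2)[OF \<open>v \<in> V\<close>] by (simp add: divide_simps mult.commute)
  qed
  also have "\<dots> = (2 / real n) * (\<Sum>j\<in>k ` V. 1 / real j)"
    by (simp add: sum_distrib_left sum.reindex[OF \<open>inj_on k V\<close>])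
  also have "\<dots> \<le> (2 / real n) * harm (card (k ` V))"
    using vk(2) assms(1) by (intro mult_left_mono sum_inverse_le_harm) (auto simp: image_iff)
  finally show ?thesis by (simp add: card_image[OF \<open>inj_on k V\<close>])
qed (simp add: harm_def)

definition cong_pm1 :: "nat \<Rightarrow> nat \<Rightarrow> bool" where
  "cong_pm1 n v \<longleftrightarrow> [int v = 1] (mod int n) \<or> [int v = -1] (mod int n)"

lemma sum_inverse_cong_pm1_le:
  assumes "finite V" and V: "\<And>v. v \<in> V \<Longrightarrow> 2 \<le> v \<and> cong_pm1 n v" and "card V \<le> 2 ^ k"
  shows "(\<Sum>v\<in>V. 1 / real v) \<le> 4 * (real k + 1) / real n"
proof -
  define V1 where "V1 = {v \<in> V. [int v = 1] (mod int n)}"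
  have harm_le: "harm (card W) \<le> real k + 1" if "W \<subseteq> V" for W
    using card_mono[OF assms(1) that] assms(3) by (intro harm_le_of_le_two_power) simp
  have "(\<Sum>v\<in>V. 1 / real v) = (\<Sum>v\<in>V1. 1 / real v) + (\<Sum>v\<in>V - V1. 1 / real v)"
    using assms(1) by (subst sum.subset_diff[of V1]) (auto simp: V1_def)
  also have "(\<Sum>v\<in>V1. 1 / real v) \<le> 2 * harm (card V1) / real n"
    using assms(1) V by (intro sum_inverse_cong_le) (force simp: V1_def)+
  also have "(\<Sum>v\<in>V - V1. 1 / real v) \<le> 2 * harm (card (V - V1)) / real n"
    using assms(1) V by (intro sum_inverse_cong_le[where r = "-1"]) (force simp: V1_def cong_pm1_def)+
  also have "2 * harm (card V1) / real n + 2 * harm (card (V - V1)) / real n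
             \<le> 2 * (real k + 1) / real n + 2 * (real k + 1) / real n"
    using harm_le[of V1] harm_le[of "V - V1"] by (intro add_mono divide_right_mono) (auto simp: V1_def)
  finally show ?thesis by simp
qed

section \<open>The prime powers congruent to \<open>\<plusminus>1\<close>\<close>

definition majorant :: "nat \<Rightarrow> nat \<Rightarrow> nat \<Rightarrow> real" where
  "majorant n q m = (if cong_pm1 n (q ^ m) then 1 / (real m * real q ^ m) else 0)"

lemma cong_pm1_imp_square_cong_one:
  assumes "cong_pm1 n v"
  shows "[v\<^sup>2 = 1] (mod n)"
proof -
  have "[(int v)\<^sup>2 = 1] (mod int n)"
    using assms cong_pow[of "int v" 1 "int n" 2] cong_pow[of "int v" "-1" "int n" 2]
    by (auto simp: cong_pm1_def)
  thus ?thesis by (metis cong_int_iff of_nat_1 of_nat_power)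
qed

lemma card_primes_cong_pm1_le:
  assumes "n > 0" "m > 0"
  shows "card {q. prime q \<and> q < n \<and> cong_pm1 n (q ^ m)} \<le> (4 * m) ^ omega n"
proof -
  have "{q. prime q \<and> q < n \<and> cong_pm1 n (q ^ m)} \<subseteq> {x. x < n \<and> [x ^ (2 * m) = 1] (mod n)}"
  proof safe
    fix q assume "q < n" "cong_pm1 n (q ^ m)"
    thus "[q ^ (2 * m) = 1] (mod n)"
      using cong_pm1_imp_square_cong_one by (metis mult.commute power_mult)
  qed
  hence "card {q. prime q \<and> q < n \<and> cong_pm1 n (q ^ m)} \<le> card {x. x < n \<and> [x ^ (2 * m) = 1] (mod n)}"
    by (intro card_mono) auto
  also have "\<dots> \<le> (2 * (2 * m)) ^ omega n" using assms by (intro card_roots_of_unity_mod) auto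
  finally show ?thesis by simp
qed

lemma card_prime_powers_cong_pm1_dyadic_le:
  assumes "n > 0"
  shows "card {(q, m). prime q \<and> q < n \<and> m \<in> {2 ^ i..<2 ^ Suc i} \<and> cong_pm1 n (q ^ m)}
           \<le> 2 ^ (i + (i + 3) * omega n)"
proof -
  define B where "B = {(2::nat) ^ i..<2 ^ Suc i}"
  define Q where "Q m = {q. prime q \<and> q < n \<and> cong_pm1 n (q ^ m)}" for m
  have "{(q, m). prime q \<and> q < n \<and> m \<in> B \<and> cong_pm1 n (q ^ m)} = (\<Union>m\<in>B. (\<lambda>q. (q, m)) ` Q m)"
    by (auto simp: Q_def)
  hence "card {(q, m). prime q \<and> q < n \<and> m \<in> B \<and> cong_pm1 n (q ^ m)}
         \<le> (\<Sum>m\<in>B. card ((\<lambda>q. (q, m)) ` Q m))"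
    by (simp add: card_UN_le B_def)
  also have "\<dots> \<le> (\<Sum>m\<in>B. (2 ^ (i + 3)) ^ omega n)"
  proof (rule sum_mono)
    fix m assume "m \<in> B"
    hence "m > 0" "4 * m \<le> 2 ^ (i + 3)" by (auto simp: B_def power_add)
    have "card ((\<lambda>q. (q, m)) ` Q m) \<le> card (Q m)" by (rule card_image_le) (simp add: Q_def)
    also have "\<dots> \<le> (4 * m) ^ omega n"
      unfolding Q_def using assms \<open>m > 0\<close> by (rule card_primes_cong_pm1_le)
    also have "\<dots> \<le> (2 ^ (i + 3)) ^ omega n" using \<open>4 * m \<le> _\<close> by (rule power_mono) simp
    finally show "card ((\<lambda>q. (q, m)) ` Q m) \<le> (2 ^ (i + 3)) ^ omega n" .
  qed
  also have "\<dots> = 2 ^ (i + (i + 3) * omega n)" by (simp add: B_def power_add power_mult)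
  finally show ?thesis by (simp add: B_def)
qed

lemma sum_inverse_prime_powers_dyadic_le:
  fixes n i :: nat
  assumes "n > 0"
  defines "P \<equiv> {(q, m). prime q \<and> q < n \<and> m \<in> {2 ^ i..<2 ^ Suc i} \<and> cong_pm1 n (q ^ m)}"
  shows "(\<Sum>(q, m)\<in>P. 1 / real (q ^ m)) \<le> 4 * (real (i + (i + 3) * omega n) + 1) / real n"
proof -
  have P: "prime q" "m \<ge> 1" "cong_pm1 n (q ^ m)" if "(q, m) \<in> P" for q m
    using that one_le_power[of 2 i] by (auto simp: P_def)
  have "P \<subseteq> {..<n} \<times> {..<2 ^ Suc i}" by (auto simp: P_def)
  hence "finite P" by (rule finite_subset) simp
  have "inj_on (\<lambda>(q, m). q ^ m) P"
  proof (rule inj_onI, clarify)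
    fix q m q' m' assume "(q, m) \<in> P" "(q', m') \<in> P" "q ^ m = q' ^ m'"
    with P show "q = q' \<and> m = m'" by (metis prime_power_inj' less_le_trans zero_less_one)
  qed
  hence "(\<Sum>(q, m)\<in>P. 1 / real (q ^ m)) = (\<Sum>v\<in>(\<lambda>(q, m). q ^ m) ` P. 1 / real v)"
    by (simp add: sum.reindex case_prod_unfold)
  also have "\<dots> \<le> 4 * (real (i + (i + 3) * omega n) + 1) / real n"
  proof (rule sum_inverse_cong_pm1_le)
    show "finite ((\<lambda>(q, m). q ^ m) ` P)" using \<open>finite P\<close> by simp
    show "2 \<le> v \<and> cong_pm1 n v" if "v \<in> (\<lambda>(q, m). q ^ m) ` P" for v
    proof -
      obtain q m where "(q, m) \<in> P" "v = q ^ m" using \<open>v \<in> _\<close> by force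
      moreover have "q \<le> q ^ m"
        using P[OF \<open>(q, m) \<in> P\<close>] power_increasing[of 1 m q] prime_gt_0_nat[of q] by simp
      ultimately show ?thesis using P prime_ge_2_nat by (metis order.trans)
    qed
    have "card ((\<lambda>(q, m). q ^ m) ` P) \<le> card P" using \<open>finite P\<close> by (rule card_image_le)
    also have "\<dots> \<le> 2 ^ (i + (i + 3) * omega n)"
      unfolding P_def using assms(1) by (rule card_prime_powers_cong_pm1_dyadic_le)
    finally show "card ((\<lambda>(q, m). q ^ m) ` P) \<le> 2 ^ (i + (i + 3) * omega n)" .
  qed
  finally show ?thesis .
qed

lemma sum_majorant_dyadic_le:
  assumes "n > 0"
  shows "(\<Sum>q | prime q \<and> q < n. \<Sum>m\<in>{2 ^ i..<2 ^ Suc i}. majorant n q m)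
           \<le> 4 * (real i + 3) * (real (omega n) + 1) / (2 ^ i * real n)"
proof -
  define B where "B = {(2::nat) ^ i..<2 ^ Suc i}"
  define P where "P = {(q, m). prime q \<and> q < n \<and> m \<in> B \<and> cong_pm1 n (q ^ m)}"
  have "(\<Sum>q | prime q \<and> q < n. \<Sum>m\<in>B. majorant n q m)
        = (\<Sum>(q, m)\<in>{q. prime q \<and> q < n} \<times> B. majorant n q m)"
    by (simp add: sum.cartesian_product)
  also have "\<dots> = (\<Sum>(q, m)\<in>P. 1 / (real m * real q ^ m))"
    by (rule sum.mono_neutral_cong_right) (auto simp: P_def B_def majorant_def split: if_splits)
  also have "\<dots> \<le> (\<Sum>(q, m)\<in>P. 1 / 2 ^ i * (1 / real (q ^ m)))"
  proof (rule sum_mono, clarify)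
    fix q m assume "(q, m) \<in> P"
    hence "(2::real) ^ i \<le> real m" "real q ^ m > 0"
      using prime_gt_0_nat by (auto simp: P_def B_def simp flip: of_nat_le_iff)
    thus "1 / (real m * real q ^ m) \<le> 1 / 2 ^ i * (1 / real (q ^ m))"
      by (simp add: divide_simps mult_right_mono)
  qed
  also have "\<dots> = 1 / 2 ^ i * (\<Sum>(q, m)\<in>P. 1 / real (q ^ m))"
    by (simp add: sum_distrib_left case_prod_unfold)
  also have "\<dots> \<le> 1 / 2 ^ i * (4 * (real (i + (i + 3) * omega n) + 1) / real n)"
    unfolding P_def B_def using assms by (intro mult_left_mono sum_inverse_prime_powers_dyadic_le) auto
  also have "\<dots> \<le> 1 / 2 ^ i * (4 * ((real i + 3) * (real (omega n) + 1)) / real n)"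
    by (intro mult_left_mono divide_right_mono) (auto simp: algebra_simps)
  finally show ?thesis by (simp add: B_def field_simps)
qed

lemma sum_split_dyadic:
  fixes f :: "nat \<Rightarrow> 'a::comm_monoid_add"
  shows "(\<Sum>m\<in>{2..<2 ^ L}. f m) = (\<Sum>i\<in>{1..<L}. \<Sum>m\<in>{2 ^ i..<2 ^ Suc i}. f m)"
proof (induction L)
  case (Suc L)
  show ?case
  proof (cases "L = 0")
    case False
    have "(2::nat) \<le> 2 ^ L" using False by (simp add: self_le_power)
    hence "{2..<2 ^ Suc L} = {2..<2 ^ L} \<union> {(2::nat) ^ L..<2 ^ Suc L}" by auto
    hence "(\<Sum>m\<in>{2..<2 ^ Suc L}. f m) = (\<Sum>m\<in>{2..<2 ^ L}. f m) + (\<Sum>m\<in>{2 ^ L..<2 ^ Suc L}. f m)"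
      by (simp add: sum.union_disjoint)
    thus ?thesis using Suc.IH False by simp
  qed simp
qed simp

lemma sum_affine_div_two_power: "(\<Sum>i<L. (real i + 3) / 2 ^ i) = 8 - (2 * real L + 8) / 2 ^ L"
proof (induction L)
  case (Suc L)
  have "(\<Sum>i<Suc L. (real i + 3) / 2 ^ i) = 8 - (2 * real L + 8) / 2 ^ L + (real L + 3) / 2 ^ L"
    using Suc.IH by simp
  also have "\<dots> = 8 - (2 * real (Suc L) + 8) / 2 ^ Suc L" by (simp add: field_simps)
  finally show ?case .
qed simp

lemma sum_majorant_small_primes_le:
  assumes "n > 0"
  shows "(\<Sum>q | prime q \<and> q < n. \<Sum>m\<in>{2..<2 ^ L}. majorant n q m) \<le> 32 * (real (omega n) + 1) / real n"
proof -
  define C where "C = 4 * (real (omega n) + 1) / real n"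
  have "(\<Sum>q | prime q \<and> q < n. \<Sum>m\<in>{2..<2 ^ L}. majorant n q m)
        = (\<Sum>i\<in>{1..<L}. \<Sum>q | prime q \<and> q < n. \<Sum>m\<in>{2 ^ i..<2 ^ Suc i}. majorant n q m)"
    unfolding sum_split_dyadic by (rule sum.swap)
  also have "\<dots> \<le> (\<Sum>i\<in>{1..<L}. C * ((real i + 3) / 2 ^ i))"
    using sum_majorant_dyadic_le[OF assms] by (intro sum_mono) (simp add: C_def field_simps)
  also have "\<dots> = C * (\<Sum>i\<in>{1..<L}. (real i + 3) / 2 ^ i)"
    by (simp add: sum_distrib_left)
  also have "\<dots> \<le> C * (\<Sum>i<L. (real i + 3) / 2 ^ i)"
    by (intro mult_left_mono sum_mono2) (auto simp: C_def)
  also have "\<dots> \<le> C * 8"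
    by (intro mult_left_mono) (simp_all add: sum_affine_div_two_power C_def)
  finally show ?thesis by (simp add: C_def)
qed

section \<open>Summation\<close>

lemma abs_term_le_majorant: "\<bar>c n (q ^ m) / (real m * real q ^ m)\<bar> \<le> majorant n q m"
proof (cases "cong_pm1 n (q ^ m)")
  case True
  have "\<bar>c n (q ^ m)\<bar> \<le> 1" by (auto simp: c_def)
  thus ?thesis using True by (simp add: majorant_def abs_divide divide_right_mono)
next
  case False
  hence "c n (q ^ m) = 0" by (auto simp: c_def cong_pm1_def)
  thus ?thesis by (simp add: majorant_def)
qed

lemma majorant_le_power:
  assumes "m \<ge> 1"
  shows "majorant n q m \<le> (1 / real q) ^ m"
proof (cases "q = 0")
  case False
  have "1 / (real m * real q ^ m) \<le> 1 / real q ^ m"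
    using assms False by (intro divide_left_mono) (auto simp: mult_le_cancel_right1)
  thus ?thesis by (simp add: majorant_def power_one_over)
qed (use assms in \<open>cases m, simp_all add: majorant_def\<close>)

lemma has_sum_atLeast_of_sums_shift:
  fixes f :: "nat \<Rightarrow> real"
  assumes "(\<lambda>j. f (j + K)) sums s" "\<And>m. K \<le> m \<Longrightarrow> 0 \<le> f m"
  shows "(f has_sum s) {K..}"
proof -
  have "((\<lambda>j. f (j + K)) has_sum s) UNIV"
    by (rule sums_nonneg_imp_has_sum) (use assms in auto)
  moreover have "bij_betw (\<lambda>j. j + K) UNIV {K..}"
    by (rule bij_betwI[where g = "\<lambda>m. m - K"]) auto
  ultimately show ?thesis using has_sum_reindex_bij_betw[of "\<lambda>j. j + K" UNIV "{K..}" f s] by simp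
qed

lemma has_sum_power_atLeast:
  fixes x :: real
  assumes "0 \<le> x" "x < 1"
  shows "((\<lambda>m. x ^ m) has_sum (x ^ K / (1 - x))) {K..}"
proof (rule has_sum_atLeast_of_sums_shift)
  have "(\<lambda>j. x ^ K * x ^ j) sums (x ^ K * (1 / (1 - x)))"
    using assms by (intro sums_mult geometric_sums) simp
  thus "(\<lambda>j. x ^ (j + K)) sums (x ^ K / (1 - x))" by (simp add: power_add mult.commute)
qed (use assms in simp)

lemma has_sum_inverse_mult_pred:
  assumes "n \<ge> 2"
  shows "((\<lambda>k. 1 / (real k * (real k - 1))) has_sum (1 / (real n - 1))) {n..}"
proof (rule has_sum_atLeast_of_sums_shift)
  \<comment> \<open>telescoping: 1/(k (k - 1)) = 1/(k - 1) - 1/k\<close>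
  define F where "F j = inverse (real n - 1 + real j)" for j
  have "filterlim (\<lambda>j. real n - 1 + real j) at_top sequentially"
    by (rule filterlim_tendsto_add_at_top[OF tendsto_const filterlim_real_sequentially])
  hence "F \<longlonglongrightarrow> 0" unfolding F_def by (rule tendsto_inverse_0_at_top)
  hence "(\<lambda>j. F j - F (Suc j)) sums (F 0 - 0)" by (rule telescope_sums')
  moreover have "F j - F (Suc j) = 1 / (real (j + n) * (real (j + n) - 1))" for j
    using assms by (simp add: F_def field_simps)
  ultimately show "(\<lambda>j. 1 / (real (j + n) * (real (j + n) - 1))) sums (1 / (real n - 1))"
    by (simp add: F_def divide_inverse)
qed (use assms in simp)

lemma norm_infsum_le_dominated:
  fixes f :: "'a \<Rightarrow> 'b::banach"
  assumes "g summable_on A" "\<And>x. x \<in> A \<Longrightarrow> norm (f x) \<le> g x"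
  shows "norm (infsum f A) \<le> infsum g A"
proof -
  have "f summable_on A"
    by (rule abs_summable_summable, rule summable_on_comparison_test[OF assms(1)]) (use assms(2) in auto)
  thus ?thesis using assms by (intro norm_infsum_le[OF has_sum_infsum has_sum_infsum])
qed

lemma abs_infsum_terms_le:
  assumes "q \<ge> 2" "M \<ge> 2"
  shows "\<bar>\<Sum>\<^sub>\<infinity>m\<in>{2..}. c n (q ^ m) / (real m * real q ^ m)\<bar>
           \<le> (\<Sum>m\<in>{2..<M}. majorant n q m) + (1 / real q) ^ M / (1 - 1 / real q)"
proof -
  define f where "f m = c n (q ^ m) / (real m * real q ^ m)" for m
  define g where "g m = (if m < M then majorant n q m else (1 / real q) ^ m)" for m
  have "(g has_sum (\<Sum>m\<in>{2..<M}. majorant n q m)) {2..<M}"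
    by (rule has_sum_finiteI) (auto simp: g_def intro!: sum.cong)
  moreover have "(g has_sum ((1 / real q) ^ M / (1 - 1 / real q))) {M..}"
    using has_sum_power_atLeast[of "1 / real q" M] assms(1)
    by (subst has_sum_cong[where g = "\<lambda>m. (1 / real q) ^ m"]) (auto simp: g_def)
  ultimately have "(g has_sum ((\<Sum>m\<in>{2..<M}. majorant n q m) + (1 / real q) ^ M / (1 - 1 / real q)))
                     ({2..<M} \<union> {M..})"
    by (rule has_sum_Un_disjoint) auto
  moreover have "{2..<M} \<union> {M..} = {2..}" using assms(2) by auto
  ultimately have g: "(g has_sum ((\<Sum>m\<in>{2..<M}. majorant n q m) + (1 / real q) ^ M / (1 - 1 / real q))) {2..}"
    by simp
  have f_le: "norm (f m) \<le> g m" if "m \<in> {2..}" for m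
    using abs_term_le_majorant[of n q m] majorant_le_power[of m n q] that by (auto simp: f_def g_def)
  from norm_infsum_le_dominated[OF has_sum_imp_summable[OF g] f_le] show ?thesis
    by (simp add: f_def[abs_def] infsumI[OF g])
qed

lemma geometric_tail_le:
  assumes "q \<ge> 2"
  shows "(1 / real q) ^ M / (1 - 1 / real q) \<le> 2 / 2 ^ M"
proof -
  have "(1 / real q) ^ M \<le> (1 / 2) ^ M" using assms by (intro power_mono) (auto simp: divide_simps)
  moreover have "1 / 2 \<le> 1 - 1 / real q" using assms by (auto simp: divide_simps)
  ultimately have "(1 / real q) ^ M / (1 - 1 / real q) \<le> (1 / 2) ^ M / (1 / 2)"
    by (intro frac_le) auto
  thus ?thesis by (simp add: power_one_over)
qed

lemma sum_geometric_tails_small_primes_le: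
  assumes "real n ^ 2 \<le> 2 ^ M" "n > 0"
  shows "(\<Sum>q | prime q \<and> q < n. (1 / real q) ^ M / (1 - 1 / real q)) \<le> 2 / real n"
proof -
  have "(\<Sum>q | prime q \<and> q < n. (1 / real q) ^ M / (1 - 1 / real q)) \<le> (\<Sum>q | prime q \<and> q < n. 2 / 2 ^ M)"
    by (intro sum_mono geometric_tail_le) (simp add: prime_ge_2_nat)
  also have "\<dots> \<le> real n * (2 / 2 ^ M)"
  proof -
    have "card {q. prime q \<and> q < n} \<le> n" using card_mono[of "{..<n}" "{q. prime q \<and> q < n}"] by auto
    hence "real (card {q. prime q \<and> q < n}) * (2 / 2 ^ M) \<le> real n * (2 / 2 ^ M)"
      by (intro mult_right_mono) simp_all
    thus ?thesis by simp
  qed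
  also have "\<dots> \<le> 2 / real n" using assms by (simp add: divide_simps power2_eq_square)
  finally show ?thesis .
qed

lemma inverse_mult_pred_summable_infsum_le:
  assumes "n \<ge> 2" "A \<subseteq> {n..}"
  shows "(\<lambda>k. 1 / (real k * (real k - 1))) summable_on A"
    and "(\<Sum>\<^sub>\<infinity>k\<in>A. 1 / (real k * (real k - 1))) \<le> 1 / (real n - 1)"
proof -
  note full = has_sum_inverse_mult_pred[OF assms(1)]
  show "(\<lambda>k. 1 / (real k * (real k - 1))) summable_on A"
    by (rule summable_on_subset[OF has_sum_imp_summable[OF full] assms(2)])
  have "(\<Sum>\<^sub>\<infinity>k\<in>A. 1 / (real k * (real k - 1))) \<le> (\<Sum>\<^sub>\<infinity>k\<in>{n..}. 1 / (real k * (real k - 1)))"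
    using assms \<open>_ summable_on A\<close> has_sum_imp_summable[OF full]
    by (intro infsum_mono_neutral) auto
  thus "(\<Sum>\<^sub>\<infinity>k\<in>A. 1 / (real k * (real k - 1))) \<le> 1 / (real n - 1)"
    by (simp add: infsumI[OF full])
qed

lemma square_le_two_power_two_power: "real n ^ 2 \<le> 2 ^ 2 ^ (2 * n)"
proof -
  have "real n ^ 2 \<le> (2 ^ n)\<^sup>2" using less_exp[of n] by (intro power_mono) (auto simp flip: of_nat_le_iff)
  also have "\<dots> = 2 ^ (2 * n)" by (simp flip: power_mult)
  also have "\<dots> \<le> 2 ^ 2 ^ (2 * n)" using less_exp[of "2 * n"] by (intro power_increasing) auto
  finally show ?thesis .
qed

lemma abs_S_le:
  assumes "n \<ge> 2"
  shows "\<bar>S n\<bar> \<le> (32 * real (omega n) + 36) / real n"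
proof -
  define M where "M = (2::nat) ^ (2 * n)"
  \<comment> \<open>for q \<ge> n, 1/(q (q - 1)) is the geometric tail from m = 2\<close>
  define G where "G q = (if q < n then (\<Sum>m\<in>{2..<M}. majorant n q m) + (1 / real q) ^ M / (1 - 1 / real q)
                         else 1 / (real q * (real q - 1)))" for q
  define Small Large where "Small = {q. prime q \<and> q < n}" and "Large = {q. prime q \<and> n \<le> q}"
  have primes: "{q. prime q} = Small \<union> Large" "Small \<inter> Large = {}"
    by (auto simp: Small_def Large_def)
  have "M \<ge> 2" using power_increasing[of 1 "2 * n" "2::nat"] assms by (simp add: M_def)
  have G_bound: "norm (\<Sum>\<^sub>\<infinity>m\<in>{2..}. c n (q ^ m) / (real m * real q ^ m)) \<le> G q" if "prime q" for q
    using abs_infsum_terms_le[OF prime_ge_2_nat[OF that] \<open>M \<ge> 2\<close>, of n]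
          abs_infsum_terms_le[OF prime_ge_2_nat[OF that] order.refl, of n] prime_ge_2_nat[OF that]
    by (auto simp: G_def field_simps power2_eq_square)
  have G_Large: "G q = 1 / (real q * (real q - 1))" if "q \<in> Large" for q
    using that by (simp add: G_def Large_def)
  have "Large \<subseteq> {n..}" by (auto simp: Large_def)
  note Large_sum = inverse_mult_pred_summable_infsum_le[OF assms this]
  have "G summable_on Large" using Large_sum(1) by (simp add: summable_on_cong[OF G_Large])
  hence "G summable_on {q. prime q}" unfolding primes(1)
    by (intro summable_on_Un_disjoint primes(2)) (simp_all add: Small_def)
  hence "norm (S n) \<le> (\<Sum>\<^sub>\<infinity>q\<in>{q. prime q}. G q)"
    unfolding S_def using G_bound by (intro norm_infsum_le_dominated) auto
  also have "\<dots> = (\<Sum>q\<in>Small. G q) + (\<Sum>\<^sub>\<infinity>q\<in>Large. G q)"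
    unfolding primes(1) using \<open>G summable_on Large\<close>
    by (subst infsum_Un_disjoint) (use primes(2) in \<open>simp_all add: Small_def\<close>)
  also have "(\<Sum>q\<in>Small. G q) = (\<Sum>q\<in>Small. \<Sum>m\<in>{2..<M}. majorant n q m)
                                 + (\<Sum>q\<in>Small. (1 / real q) ^ M / (1 - 1 / real q))"
    by (simp add: G_def Small_def sum.distrib)
  also have "(\<Sum>q\<in>Small. \<Sum>m\<in>{2..<M}. majorant n q m) \<le> 32 * (real (omega n) + 1) / real n"
    unfolding Small_def M_def using assms by (intro sum_majorant_small_primes_le) simp
  also have "(\<Sum>q\<in>Small. (1 / real q) ^ M / (1 - 1 / real q)) \<le> 2 / real n"
    unfolding Small_def M_def using square_le_two_power_two_power assms
    by (intro sum_geometric_tails_small_primes_le) auto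
  also have "(\<Sum>\<^sub>\<infinity>q\<in>Large. G q) \<le> 2 / real n"
  proof -
    have "(\<Sum>\<^sub>\<infinity>q\<in>Large. G q) \<le> 1 / (real n - 1)"
      using Large_sum(2) by (simp add: infsum_cong[OF G_Large])
    also have "\<dots> \<le> 2 / real n" using assms by (simp add: divide_simps)
    finally show ?thesis .
  qed
  also have "32 * (real (omega n) + 1) / real n + 2 / real n + 2 / real n
             = (32 * real (omega n) + 36) / real n"
    by (simp add: add_divide_distrib[symmetric])
  finally show ?thesis by simp
qed

lemma omega_pos:
  assumes "n \<ge> 2"
  shows "omega n > 0"
proof -
  obtain p where "prime p" "p dvd n" using prime_factor_nat[of n] assms by auto
  hence "p \<in> prime_factors n" using assms by (auto simp: in_prime_factors_iff)
  thus ?thesis by (auto simp: omega_def card_gt_0_iff)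
qed

theorem lemma9:
  shows "S \<in> O[at_top](\<lambda>n. real (omega n) / real n)"
proof (rule bigoI[where c = 68])
  show "\<forall>\<^sub>F n in at_top. norm (S n) \<le> 68 * norm (real (omega n) / real n)"
    using eventually_ge_at_top[of "2::nat"]
  proof eventually_elim
    case (elim n)
    have "norm (S n) \<le> (32 * real (omega n) + 36) / real n" using abs_S_le[OF elim] by simp
    also have "\<dots> \<le> 68 * real (omega n) / real n"
      using omega_pos[OF elim] by (intro divide_right_mono) auto
    finally show ?case by simp
  qed
qed

end
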